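(* Let $c,M>0$ and assume that either $\eta>1$ and $a,b>0$, or $\eta=1$ and $b>a>0$. Then there is a constant $C>0$ such that for all real $x,y$ with $0\le x\le My<\infty$, $$\frac{a(1+x)y^2+b(1+x)^\eta y^2}{1+y^2}-\frac{2b(1+x)^\eta y^4}{(1+y^2)^2}+\frac{c(1+x)^\eta y^4}{(1+y^2)^2(1+\log(1+y^2))}\le C.$$ *)

theory Defs
  imports Complex_Main
begin

end

theory Submission
  imports Defs "HOL-Real_Asymp.Real_Asymp"
begin

(* With X = 1 + x and t = y^2 the expression equals a X t/(1+t) + X^eta profile b c t, and
   profile b c t tends to -b as t grows.  Choose 0 < beta < b such that a X - beta X^eta is
   bounded above for X >= 0: for eta > 1 any beta works, for eta = 1 take beta = a < b.  Once
   profile b c t <= -beta the expression is at most a X - beta X^eta; otherwise y is bounded,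
   hence so is x <= M y, and profile b c t <= b + c. *)

definition profile :: "real \<Rightarrow> real \<Rightarrow> real \<Rightarrow> real" where
  "profile b c t = b * t * (1 - t) / (1 + t)^2 + c * t^2 / ((1 + t)^2 * (1 + ln (1 + t)))"

lemma split_off_profile:
  fixes t :: real
  assumes "t \<noteq> -1"
  shows "(a * X * t + b * P * t) / (1 + t) - 2 * b * P * t^2 / (1 + t)^2
      + c * P * t^2 / ((1 + t)^2 * (1 + ln (1 + t)))
    = a * X * (t / (1 + t)) + P * profile b c t"
proof -
  have "1 + t \<noteq> 0" using assms by linarith
  then have "(a * X * t + b * P * t) / (1 + t) - 2 * b * P * t^2 / (1 + t)^2
      = a * X * (t / (1 + t)) + P * (b * t * (1 - t) / (1 + t)^2)"
    by (simp add: divide_simps) (simp add: power2_eq_square algebra_simps)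
  then show ?thesis
    unfolding profile_def by (simp add: algebra_simps)
qed

lemma expression_eq_profile:
  fixes a b c x y \<eta> :: real
  shows "(a * (1 + x) * y^2 + b * (1 + x) powr \<eta> * y^2) / (1 + y^2)
      - 2 * b * (1 + x) powr \<eta> * y^4 / (1 + y^2)^2
      + c * (1 + x) powr \<eta> * y^4 / ((1 + y^2)^2 * (1 + ln (1 + y^2)))
    = a * (1 + x) * (y^2 / (1 + y^2)) + (1 + x) powr \<eta> * profile b c (y^2)"
proof -
  have y4: "y^4 = (y^2)^2"
    by simp
  show ?thesis
    unfolding y4 by (rule split_off_profile) (smt (verit) zero_le_power2)
qed

lemma profile_tendsto: "(profile b c \<longlongrightarrow> - b) at_top"
  unfolding profile_def by real_asymp

lemma profile_le_sum:
  fixes b c t :: real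
  assumes "b \<ge> 0" "c \<ge> 0" "t \<ge> 0"
  shows "profile b c t \<le> b + c"
proof -
  have "t * (1 - t) \<le> (1 + t)^2"
    using assms by (simp add: power2_eq_square algebra_simps)
  then have first: "t * (1 - t) / (1 + t)^2 \<le> 1"
    using assms by simp
  have "t^2 \<le> (1 + t)^2"
    using assms by (intro power_mono) auto
  also have "\<dots> \<le> (1 + t)^2 * (1 + ln (1 + t))"
    using assms by simp
  finally have second: "t^2 / ((1 + t)^2 * (1 + ln (1 + t))) \<le> 1"
    using assms by (subst pos_divide_le_eq) (auto simp: add_pos_nonneg)
  have "profile b c t = b * (t * (1 - t) / (1 + t)^2) + c * (t^2 / ((1 + t)^2 * (1 + ln (1 + t))))"
    unfolding profile_def by simp
  also have "\<dots> \<le> b * 1 + c * 1"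
    using assms first second by (intro add_mono mult_left_mono) auto
  finally show ?thesis by simp
qed

lemma linear_minus_powr_bounded_above:
  fixes a \<beta> \<eta> :: real
  assumes "\<eta> > 1" "\<beta> > 0"
  shows "\<exists>K. \<forall>X\<ge>0. a * X - \<beta> * X powr \<eta> \<le> K"
proof -
  define X0 where "X0 = (\<bar>a\<bar> / \<beta>) powr (1 / (\<eta> - 1))"
  have "a * X - \<beta> * X powr \<eta> \<le> \<bar>a\<bar> * X0" if "X \<ge> 0" for X
  proof (cases "X0 \<le> X")
    case True
    have "\<bar>a\<bar> / \<beta> = X0 powr (\<eta> - 1)"
      using assms by (simp add: X0_def powr_powr)
    also have "\<dots> \<le> X powr (\<eta> - 1)"
      using True assms by (intro powr_mono2) (auto simp: X0_def)
    finally have "\<bar>a\<bar> \<le> \<beta> * X powr (\<eta> - 1)"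
      using assms by (simp add: field_simps)
    then have "a * X \<le> \<beta> * X powr (\<eta> - 1) * X"
      using that by (metis abs_ge_self mult_right_mono order_trans)
    also have "\<dots> = \<beta> * X powr \<eta>"
      using that by (cases "X = 0") (simp_all add: powr_diff)
    moreover have "0 \<le> \<bar>a\<bar> * X0"
      by (simp add: X0_def)
    ultimately show ?thesis
      by linarith
  next
    case False
    then have "a * X \<le> \<bar>a\<bar> * X0"
      using that by (metis abs_ge_self abs_ge_zero less_le_not_le mult_mono nle_le)
    then show ?thesis
      using assms by (smt (verit) mult_nonneg_nonneg powr_ge_zero)
  qed
  then show ?thesis by blast
qed

lemma exists_margin_below:
  fixes a b \<eta> :: real
  assumes "(\<eta> > 1 \<and> a > 0 \<and> b > 0) \<or> (\<eta> = 1 \<and> b > a \<and> a > 0)"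
  shows "\<exists>\<beta> K. 0 < \<beta> \<and> \<beta> < b \<and> (\<forall>X\<ge>0. a * X - \<beta> * X powr \<eta> \<le> K)"
  using assms
proof
  assume h: "\<eta> > 1 \<and> a > 0 \<and> b > 0"
  then obtain K where "\<forall>X\<ge>0. a * X - b / 2 * X powr \<eta> \<le> K"
    using linear_minus_powr_bounded_above[of \<eta> "b / 2" a] by auto
  with h show ?thesis
    by (intro exI[of _ "b / 2"] exI[of _ K]) auto
next
  assume "\<eta> = 1 \<and> b > a \<and> a > 0"
  then have "\<forall>X\<ge>0. a * X - a * X powr \<eta> \<le> 0" by simp
  then show ?thesis
    using \<open>\<eta> = 1 \<and> b > a \<and> a > 0\<close> by blast
qed

lemma bound_if_profile_le_neg:
  fixes a \<beta> \<eta> K X t :: real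
  assumes "a \<ge> 0" "X \<ge> 0" "t \<ge> 0"
    and "a * X - \<beta> * X powr \<eta> \<le> K" "profile b c t \<le> - \<beta>"
  shows "a * X * (t / (1 + t)) + X powr \<eta> * profile b c t \<le> K"
proof -
  have "a * X * (t / (1 + t)) \<le> a * X"
    using assms by (intro mult_left_le) auto
  moreover have "X powr \<eta> * profile b c t \<le> - \<beta> * X powr \<eta>"
    using mult_left_mono[OF assms(5) powr_ge_zero] by (simp add: mult.commute)
  ultimately show ?thesis
    using assms by linarith
qed

lemma bound_if_base_le:
  fixes a b c \<eta> X X1 t :: real
  assumes "a \<ge> 0" "b \<ge> 0" "c \<ge> 0" "\<eta> \<ge> 0" "t \<ge> 0" "0 \<le> X" "X \<le> X1"
  shows "a * X * (t / (1 + t)) + X powr \<eta> * profile b c t \<le> a * X1 + (b + c) * X1 powr \<eta>"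
proof -
  have "a * X * (t / (1 + t)) \<le> a * X"
    using assms by (intro mult_left_le) auto
  also have "\<dots> \<le> a * X1"
    using assms by (intro mult_left_mono)
  finally have "a * X * (t / (1 + t)) \<le> a * X1" .
  moreover have "X powr \<eta> * profile b c t \<le> X powr \<eta> * (b + c)"
    using assms profile_le_sum by (intro mult_left_mono) auto
  moreover have "\<dots> \<le> X1 powr \<eta> * (b + c)"
    using assms by (intro mult_right_mono powr_mono2) auto
  ultimately show ?thesis
    by (simp add: mult.commute)
qed

theorem lemma5p1:
  fixes a b c M \<eta> :: real
  assumes "c > 0" and "M > 0"
    and "(\<eta> > 1 \<and> a > 0 \<and> b > 0) \<or> (\<eta> = 1 \<and> b > a \<and> a > 0)"
  shows "\<exists>C>0. \<forall>x y :: real. 0 \<le> x \<and> x \<le> M * y \<longrightarrow>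
     (a * (1 + x) * y^2 + b * (1 + x) powr \<eta> * y^2) / (1 + y^2)
     - 2 * b * (1 + x) powr \<eta> * y^4 / (1 + y^2)^2
     + c * (1 + x) powr \<eta> * y^4 / ((1 + y^2)^2 * (1 + ln (1 + y^2))) \<le> C"
proof -
  have params: "a > 0" "b > 0" "\<eta> \<ge> 0"
    using assms(3) by auto
  obtain \<beta> K where \<beta>: "\<beta> < b" and K: "\<forall>X\<ge>0. a * X - \<beta> * X powr \<eta> \<le> K"
    using exists_margin_below[OF assms(3)] by blast
  have "eventually (\<lambda>t. profile b c t < - \<beta>) at_top"
    using \<beta> by (intro order_tendstoD(2)[OF profile_tendsto]) simp
  then obtain T where T: "\<And>t. t \<ge> T \<Longrightarrow> profile b c t \<le> - \<beta>"
    unfolding eventually_at_top_linorder by force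
  define X1 where "X1 = 1 + M * max 1 T"
  define C where "C = max 1 (max K (a * X1 + (b + c) * X1 powr \<eta>))"
  have "a * (1 + x) * (y^2 / (1 + y^2)) + (1 + x) powr \<eta> * profile b c (y^2) \<le> C"
    (is "?F \<le> C") if "0 \<le> x" "x \<le> M * y" for x y
  proof (cases "T \<le> y^2")
    case True
    then have "?F \<le> K"
      using that params K T by (intro bound_if_profile_le_neg) auto
    then show ?thesis
      by (simp add: C_def)
  next
    case False
    then have "y \<le> max 1 T"
      by (smt (verit) power2_eq_square mult_le_cancel_left1)
    then have "1 + x \<le> X1"
      unfolding X1_def using that assms(2) by (smt (verit) mult_left_mono)
    then have "?F \<le> a * X1 + (b + c) * X1 powr \<eta>"
      using that params assms(1) by (intro bound_if_base_le) auto
    then show ?thesis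
      by (simp add: C_def)
  qed
  then show ?thesis
    unfolding expression_eq_profile by (intro exI[of _ C]) (auto simp: C_def)
qed

end
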